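(* For every horizon $H$ there exist a class $\mathcal{M}$ of MDPs with shared finite layered state space $\mathcal{X}$, action space $\mathcal{A}=\{a_1,a_2\}$ and horizon $H$, a deterministic evaluation policy $\pi_e$, and an offline policy $\pi_b$, such that for every $M\in\mathcal{M}$ the pushforward concentrability coefficient of $M$ with respect to $\mu_h=d_h^{\pi_b}(\cdot;M)$ satisfies $\mathsf{C}_{\mathrm{pf}}\le4$, and such that any algorithm (given no value function class) that estimates $V^{\pi_e}(\rho;M)$ up to precision $1/2$ for all $M\in\mathcal{M}$ must use $\Omega(2^H)$ offline trajectories (sampled in $M$ with $\pi_b$) in some $M\in\mathcal{M}$; specifically, with $o(2^H)$ trajectories it fails to be $1/2$-accurate with probability at least $1/4$ on some $M\in\mathcal{M}$.
   Context: Layered finite-horizon MDP $M=(\mathcal{X},\mathcal{A},T,r,H,\rho)$ with rewards in $[-1,1]$; $d_h^\pi(x,a;M)$ is the occupancy of $\pi$ at layer $h$; $V^\pi(\rho;M)=\mathbb{E}_{x_1\sim\rho}V_1^\pi(x_1)$. A trajectory is $(x_1,a_1,r_1,\dots,x_H)$ with $x_1\sim\rho$, $a_h\sim\pi_b(\cdot|x_h)$, $r_h\sim r(x_h,a_h)$, $x_{h+1}\sim T(\cdot|x_h,a_h)$. Pushforward concentrability w.r.t. $\mu$ (with $\mu(x)=\sum_a\mu_h(x,a)$, $\mu(a|x)=\mu_h(x,a)/\mu(x)$ for $x\in\mathcal{X}_h$): if $\mu(a|x)\ge1/\mathsf{C}_{\mathcal{A}}$ for all $x,a$, and $T(x'|x,a)/\mu(x')<\mathsf{C}_{\mathcal{X}}$,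 $\rho(x)/\mu(x)<\mathsf{C}_{\mathcal{X}}$ for all $x,x',a$, then $\mathsf{C}_{\mathrm{pf}}=\mathsf{C}_{\mathcal{X}}\mathsf{C}_{\mathcal{A}}$. *)

theory Defs
  imports "HOL-Probability.Probability"
begin

text \<open>Finite-horizon MDPs with states encoded as natural numbers (any finite layered
state space embeds into nat) and the two actions a1, a2 encoded as the two elements of bool.
Layers are indexed 1..H by a layer map X.\<close>

record mdp =
  init  :: "nat pmf"
  trans :: "nat \<Rightarrow> bool \<Rightarrow> nat pmf"
  rew   :: "nat \<Rightarrow> bool \<Rightarrow> real pmf"

type_synonym policy = "nat \<Rightarrow> bool pmf"
type_synonym trajectory = "(nat \<times> bool \<times> real) list"

definition layered_mdp :: "(nat \<Rightarrow> nat set) \<Rightarrow> nat \<Rightarrow> mdp \<Rightarrow> bool" where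
  "layered_mdp X H M \<longleftrightarrow>
     (\<forall>h\<in>{1..H}. finite (X h)) \<and>
     (\<forall>h\<in>{1..H}. \<forall>h'\<in>{1..H}. h \<noteq> h' \<longrightarrow> X h \<inter> X h' = {}) \<and>
     set_pmf (init M) \<subseteq> X 1 \<and>
     (\<forall>h\<in>{1..<H}. \<forall>x\<in>X h. \<forall>a. set_pmf (trans M x a) \<subseteq> X (Suc h)) \<and>
     (\<forall>x a. set_pmf (rew M x a) \<subseteq> {-1..1})"

definition state_dist :: "mdp \<Rightarrow> policy \<Rightarrow> nat \<Rightarrow> nat pmf" where
  "state_dist M \<pi> h =
     ((\<lambda>p. bind_pmf p (\<lambda>x. bind_pmf (\<pi> x) (\<lambda>a. trans M x a))) ^^ (h - 1)) (init M)"

definition occupancy :: "mdp \<Rightarrow> policy \<Rightarrow> nat \<Rightarrow> nat \<Rightarrow> bool \<Rightarrow> real" where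
  "occupancy M \<pi> h x a = pmf (state_dist M \<pi> h) x * pmf (\<pi> x) a"

definition pf_conc_le :: "(nat \<Rightarrow> nat set) \<Rightarrow> nat \<Rightarrow> mdp \<Rightarrow> (nat \<Rightarrow> nat \<Rightarrow> bool \<Rightarrow> real) \<Rightarrow> real \<Rightarrow> bool" where
  "pf_conc_le X H M \<mu> C \<longleftrightarrow>
     (\<forall>x'\<in>X 1. \<forall>a'. pmf (init M) x' \<le> C * \<mu> 1 x' a') \<and>
     (\<forall>h\<in>{1..<H}. \<forall>x\<in>X h. \<forall>a. \<forall>x'\<in>X (Suc h). \<forall>a'.
        pmf (trans M x a) x' \<le> C * \<mu> (Suc h) x' a')"

fun traj_from :: "mdp \<Rightarrow> policy \<Rightarrow> nat \<Rightarrow> nat \<Rightarrow> trajectory pmf" where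
  "traj_from M \<pi> 0 x = return_pmf []"
| "traj_from M \<pi> (Suc k) x =
     bind_pmf (\<pi> x) (\<lambda>a. bind_pmf (rew M x a) (\<lambda>r. bind_pmf (trans M x a) (\<lambda>x'.
       map_pmf (\<lambda>\<tau>. (x, a, r) # \<tau>) (traj_from M \<pi> k x'))))"

definition traj :: "mdp \<Rightarrow> policy \<Rightarrow> nat \<Rightarrow> trajectory pmf" where
  "traj M \<pi> H = bind_pmf (init M) (traj_from M \<pi> H)"

definition policy_value :: "mdp \<Rightarrow> policy \<Rightarrow> nat \<Rightarrow> real" where
  "policy_value M \<pi> H = measure_pmf.expectation (traj M \<pi> H) (\<lambda>\<tau>. sum_list (map (\<lambda>(x, a, r). r) \<tau>))"

fun iid :: "nat \<Rightarrow> 'a pmf \<Rightarrow> 'a list pmf" where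
  "iid 0 p = return_pmf []"
| "iid (Suc n) p = bind_pmf p (\<lambda>y. map_pmf (\<lambda>ys. y # ys) (iid n p))"

definition dataset :: "mdp \<Rightarrow> policy \<Rightarrow> nat \<Rightarrow> nat \<Rightarrow> trajectory list pmf" where
  "dataset M \<pi>b H n = iid n (traj M \<pi>b H)"

definition det_policy :: "(nat \<Rightarrow> bool) \<Rightarrow> policy" where
  "det_policy f = (\<lambda>x. return_pmf (f x))"

end

theory Submission
  imports Defs
begin

text \<open>
  In each hard instance a hidden bit is carried along the trajectory: a state only shows it
  xor-ed with an unknown mask bit of its cell, and the reward in the last layer is \<open>\<plusminus>1\<close> according
  to the hidden bit xor a global sign \<open>\<sigma>\<close>. The evaluation policy never changes the hidden bit, so
  its value is \<open>\<plusminus>1\<close> according to \<open>\<sigma>\<close>; the uniform behaviour policy visits every layer uniformly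
  (whence the concentrability bound 4) and, whenever it plays \<open>False\<close> in a middle layer, xors the
  hidden bit with another unknown mask bit.

  With \<open>8^H\<close> cells per layer and at most \<open>2^H/16\<close> trajectories, with probability at least 1/2 the
  trajectories visit pairwise disjoint cells and each plays \<open>False\<close> in a middle layer. On such a
  dataset, changing \<open>\<sigma>\<close> together with the mask bits at the last such step and at all later states of
  every trajectory is a likelihood-preserving involution of the masks. So the mixtures over all
  masks of the data distributions for the two signs agree there, and Le Cam's two-point argument
  forces error probability at least 1/4 for one of them.
\<close>

section \<open>Discrete distributions and i.i.d. samples\<close>

lemma prob_bind_pmf:
  "measure_pmf.prob (bind_pmf M N) X = measure_pmf.expectation M (\<lambda>x. measure_pmf.prob (N x) X)"
proof -
  have "ennreal (measure_pmf.prob (bind_pmf M N) X) = (\<integral>\<^sup>+x. emeasure (measure_pmf (N x)) X \<partial>M)"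
    by (simp add: measure_pmf.emeasure_eq_measure[symmetric])
  also have "\<dots> = ennreal (measure_pmf.expectation M (\<lambda>x. measure_pmf.prob (N x) X))"
    by (simp add: measure_pmf.emeasure_eq_measure)
       (rule nn_integral_eq_integral, auto intro!: measure_pmf.integrable_const_bound[where B=1])
  finally show ?thesis
    by (subst (asm) ennreal_inj) (auto intro: integral_nonneg_AE)
qed

lemma prob_bind_pmf_le:
  assumes "\<And>x. x \<in> set_pmf p \<Longrightarrow> measure_pmf.prob (f x) A \<le> c"
  shows "measure_pmf.prob (bind_pmf p f) A \<le> c"
  unfolding prob_bind_pmf
  by (rule measure_pmf.integral_le_const)
     (auto intro!: measure_pmf.integrable_const_bound[where B=1] simp: AE_measure_pmf_iff assms)

lemma pmf_bind_pmf_recover: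
  assumes "\<And>a y. a \<in> set_pmf M \<Longrightarrow> y \<in> set_pmf (f a) \<Longrightarrow> g y = a"
  shows "pmf (bind_pmf M f) x = pmf M (g x) * pmf (f (g x)) x"
proof -
  have "pmf (bind_pmf M f) x = (\<integral>a. pmf (f a) x \<partial>measure_pmf M)" by (rule pmf_bind)
  also have "\<dots> = (\<Sum>a\<in>{g x}. pmf (f a) x * pmf M a)"
    by (rule integral_measure_pmf_real) (auto simp: set_pmf_iff[symmetric] dest: assms)
  finally show ?thesis by simp
qed

lemma pmf_map_pmf_left_inverse:
  assumes "\<And>a. g (f a) = a"
  shows "pmf (map_pmf f M) x = (if f (g x) = x then pmf M (g x) else 0)"
  unfolding map_pmf_def
  by (subst pmf_bind_pmf_recover[where g=g]) (auto simp: assms)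

definition coin :: "bool pmf" where "coin = bernoulli_pmf (1/2)"

lemma pmf_coin[simp]: "pmf coin b = 1/2" by (simp add: coin_def)
lemma set_pmf_coin[simp]: "set_pmf coin = UNIV" by (simp add: coin_def)

lemma map_pmf_xor_coin: "map_pmf (\<lambda>b. b \<noteq> c) coin = coin"
  by (rule pmf_eqI, subst pmf_map_pmf_left_inverse[where g="\<lambda>b. b \<noteq> c"]) auto

lemma bind_pmf_coin_xor: "bind_pmf coin (\<lambda>b. G (b \<noteq> c)) = bind_pmf coin G"
proof -
  have "bind_pmf coin G = bind_pmf (map_pmf (\<lambda>b. b \<noteq> c) coin) G" by (simp only: map_pmf_xor_coin)
  then show ?thesis by (simp add: bind_map_pmf)
qed

lemma prob_iid_Suc:
  "measure_pmf.prob (iid (Suc n) p) E = measure_pmf.expectation p (\<lambda>y. measure_pmf.prob (iid n p) {d. y # d \<in> E})"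
  by (simp add: prob_bind_pmf vimage_def)

lemma pmf_iid: "pmf (iid n p) d = (if length d = n then prod_list (map (pmf p) d) else 0)"
proof (induction n arbitrary: d)
  case 0
  then show ?case by (cases d) auto
next
  case (Suc n)
  have "pmf (iid (Suc n) p) d = pmf p (hd d) * pmf (map_pmf ((#) (hd d)) (iid n p)) d"
    by (subst iid.simps, subst pmf_bind_pmf_recover[where g=hd]) auto
  also have "\<dots> = pmf p (hd d) * (if hd d # tl d = d then pmf (iid n p) (tl d) else 0)"
    by (subst pmf_map_pmf_left_inverse[where g=tl]) auto
  finally show ?case using Suc by (cases d) auto
qed

lemma set_pmf_iid: "d \<in> set_pmf (iid n p) \<Longrightarrow> length d = n \<and> set d \<subseteq> set_pmf p"
  by (induction n arbitrary: d) fastforce+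

lemma prob_iid_exists_le:
  "measure_pmf.prob (iid n p) {d. \<exists>x\<in>set d. x \<in> S} \<le> n * measure_pmf.prob p S"
proof (induction n)
  case 0
  then show ?case by simp
next
  case (Suc n)
  let ?E = "{d. \<exists>x\<in>set d. x \<in> S}"
  have ind: "integrable (measure_pmf p) (indicator S :: 'a \<Rightarrow> real)"
    by (rule measure_pmf.integrable_const_bound[where B=1]) (auto simp: indicator_def)
  have "measure_pmf.prob (iid (Suc n) p) ?E = measure_pmf.expectation p (\<lambda>y. measure_pmf.prob (iid n p) {d. y # d \<in> ?E})"
    by (rule prob_iid_Suc)
  also have "\<dots> \<le> measure_pmf.expectation p (\<lambda>y. indicator S y + n * measure_pmf.prob p S)"
  proof (rule integral_mono)
    fix y
    show "measure_pmf.prob (iid n p) {d. y # d \<in> ?E} \<le> indicator S y + n * measure_pmf.prob p S"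
      using Suc by (cases "y \<in> S") simp_all
  next
    show "integrable (measure_pmf p) (\<lambda>y. indicator S y + real n * measure_pmf.prob p S)"
      using ind by simp
  qed (auto intro!: measure_pmf.integrable_const_bound[where B=1])
  also have "\<dots> = measure_pmf.prob p S + n * measure_pmf.prob p S"
    using ind by simp
  finally show ?case by (simp add: algebra_simps)
qed

fun has_related_pair :: "('a \<Rightarrow> 'a \<Rightarrow> bool) \<Rightarrow> 'a list \<Rightarrow> bool" where
  "has_related_pair R [] = False"
| "has_related_pair R (x # d) = ((\<exists>y\<in>set d. R x y) \<or> has_related_pair R d)"

lemma not_has_related_pair:
  assumes "\<not> has_related_pair R d" "\<And>x y. R x y \<Longrightarrow> R y x" "x \<in> set d" "y \<in> set d" "x \<noteq> y"
  shows "\<not> R x y"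
  using assms by (induction d) auto

lemma prob_iid_related_pair_le:
  assumes "\<And>x. x \<in> set_pmf p \<Longrightarrow> measure_pmf.prob p {y. R x y} \<le> c" "c \<ge> 0"
  shows "measure_pmf.prob (iid n p) {d. has_related_pair R d} \<le> n * n * c"
proof (induction n)
  case 0
  then show ?case by simp
next
  case (Suc n)
  have "measure_pmf.prob (iid (Suc n) p) {d. has_related_pair R d} =
      measure_pmf.expectation p (\<lambda>x. measure_pmf.prob (iid n p) {d. has_related_pair R (x # d)})"
    by (simp only: prob_iid_Suc mem_Collect_eq)
  also have "\<dots> \<le> measure_pmf.expectation p (\<lambda>x. n * c + n * n * c)"
  proof (rule integral_mono_AE)
    show "AE x in measure_pmf p. measure_pmf.prob (iid n p) {d. has_related_pair R (x # d)} \<le> n * c + n * n * c"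
      unfolding AE_measure_pmf_iff
    proof
      fix x assume x: "x \<in> set_pmf p"
      have "measure_pmf.prob (iid n p) {d. has_related_pair R (x # d)} \<le>
        measure_pmf.prob (iid n p) {d. \<exists>y\<in>set d. y \<in> {y. R x y}} + measure_pmf.prob (iid n p) {d. has_related_pair R d}"
        by (rule order_trans[OF _ measure_Un_le]) (auto intro!: measure_pmf.finite_measure_mono)
      also have "\<dots> \<le> n * c + n * n * c"
        using prob_iid_exists_le[of n p "{y. R x y}"] mult_left_mono[OF assms(1)[OF x], of n] Suc
        by simp
      finally show "measure_pmf.prob (iid n p) {d. has_related_pair R (x # d)} \<le> n * c + n * n * c" .
    qed
  qed (auto intro!: measure_pmf.integrable_const_bound[where B=1])
  also have "\<dots> \<le> real (Suc n) * real (Suc n) * c" using assms(2) by (simp add: algebra_simps)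
  finally show ?case by simp
qed

lemma prob_iid_coin_all:
  "I \<subseteq> {..<m} \<Longrightarrow> measure_pmf.prob (iid m coin) {as. \<forall>i\<in>I. as ! i} = (1/2) ^ card I"
proof (induction m arbitrary: I)
  case 0
  then show ?case by simp
next
  case (Suc m)
  define I' where "I' = {i. Suc i \<in> I}"
  have I': "I' \<subseteq> {..<m}" using Suc.prems by (auto simp: I'_def)
  have I_split: "I = Suc ` I' \<union> (I \<inter> {0})"
  proof (intro equalityI subsetI)
    fix i assume "i \<in> I"
    then show "i \<in> Suc ` I' \<union> (I \<inter> {0})"
      by (cases i) (auto simp: I'_def)
  qed (auto simp: I'_def)
  have card_I: "card I = card I' + (if 0 \<in> I then 1 else 0)"
  proof -
    have "finite I'" using I' finite_subset by blast
    then have "card (Suc ` I' \<union> (I \<inter> {0})) = card I' + card (I \<inter> {0})"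
      by (subst card_Un_disjoint) (auto simp: card_image)
    then show ?thesis using I_split by (auto split: if_splits)
  qed
  have slice: "{as. \<forall>i\<in>I. (a # as) ! i} = (if 0 \<in> I \<and> \<not> a then {} else {as. \<forall>i\<in>I'. as ! i})" for a
    by (auto simp: I'_def nth_Cons split: nat.splits)
  have "measure_pmf.prob (iid (Suc m) coin) {as. \<forall>i\<in>I. as ! i} =
      measure_pmf.expectation coin (\<lambda>a. if 0 \<in> I \<and> \<not> a then 0 else (1/2) ^ card I')"
    unfolding prob_iid_Suc mem_Collect_eq slice
    by (rule Bochner_Integration.integral_cong) (simp_all add: Suc.IH[OF I'])
  also have "\<dots> = (1/2) ^ card I"
    by (subst integral_measure_pmf_real[where A=UNIV]) (auto simp: UNIV_bool card_I)
  finally show ?case .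
qed

lemma sum_Pow_sym_diff:
  assumes "F \<subseteq> A"
  shows "(\<Sum>W\<in>Pow A. g W) = (\<Sum>W\<in>Pow A. g (sym_diff W F))"
proof -
  have "sym_diff (sym_diff W F) F = W" for W :: "'a set" by auto
  then show ?thesis
    by (intro sum.reindex_bij_witness[where i="\<lambda>W. sym_diff W F" and j="\<lambda>W. sym_diff W F"])
       (use assms in auto)
qed

lemma prob_far_from_1_or_minus_1:
  "measure_pmf.prob p {v. \<bar>v - 1\<bar> > 1/2} + measure_pmf.prob p {v. \<bar>v - (-1)\<bar> > (1/2::real)} \<ge> 1"
proof -
  have "1 = measure_pmf.prob p ({v. \<bar>v - 1\<bar> > (1/2::real)} \<union> {v. \<bar>v - (-1)\<bar> > 1/2})"
    by (subst measure_pmf.prob_space[symmetric]) (rule arg_cong[where f="measure _"], auto simp: abs_if)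
  also have "\<dots> \<le> measure_pmf.prob p {v. \<bar>v - 1\<bar> > 1/2} + measure_pmf.prob p {v. \<bar>v - (-1)\<bar> > 1/2}"
    by (rule measure_Un_le) auto
  finally show ?thesis .
qed

section \<open>Trajectories of finite-horizon MDPs\<close>

lemma set_pmf_traj_from:
  "\<tau> \<in> set_pmf (traj_from M \<pi> k x) \<Longrightarrow> length \<tau> = k \<and> (0 < k \<longrightarrow> fst (\<tau> ! 0) = x)"
  by (induction k arbitrary: x \<tau>) auto

lemma map_actions_traj_from:
  "map_pmf (map (\<lambda>(x, a, r). a)) (traj_from M (\<lambda>_. p) k x) = iid k p"
proof (induction k arbitrary: x)
  case (Suc k)
  have "map_pmf (\<lambda>\<tau>. a # map (\<lambda>(x, a, r). a) \<tau>) (traj_from M (\<lambda>_. p) k x') = map_pmf ((#) a) (iid k p)"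
    for a x'
    using Suc.IH[of x', symmetric] by (simp add: map_pmf_comp)
  then show ?case by (simp add: map_bind_pmf map_pmf_comp)
qed simp

lemma map_actions_traj:
  "map_pmf (map (\<lambda>(x, a, r). a)) (traj M (\<lambda>_. p) H) = iid H p"
  unfolding traj_def by (simp add: map_bind_pmf map_actions_traj_from)

lemma prob_traj_from_state_le:
  assumes "\<And>x a. measure_pmf.prob (trans M x a) S \<le> c"
  shows "1 \<le> i \<Longrightarrow> i < k \<Longrightarrow> measure_pmf.prob (traj_from M \<pi> k x) {\<tau>. fst (\<tau> ! i) \<in> S} \<le> c"
proof (induction k arbitrary: x i)
  case 0
  then show ?case by simp
next
  case (Suc k)
  show ?case unfolding traj_from.simps
  proof (rule prob_bind_pmf_le, rule prob_bind_pmf_le)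
    fix a r
    let ?p = "bind_pmf (trans M x a) (\<lambda>x'. map_pmf ((#) (x, a, r)) (traj_from M \<pi> k x'))"
    show "measure_pmf.prob ?p {\<tau>. fst (\<tau> ! i) \<in> S} \<le> c"
    proof (cases "i = 1")
      case True
      have "map_pmf (\<lambda>\<tau>. fst (\<tau> ! 0)) (traj_from M \<pi> k x') = return_pmf x'" for x'
        using set_pmf_traj_from[of _ M \<pi> k x'] Suc.prems True
        by (subst map_pmf_cong[OF refl, where g="\<lambda>_. x'"]) auto
      then have "map_pmf (\<lambda>\<tau>. fst (\<tau> ! 1)) ?p = trans M x a"
        by (simp add: map_bind_pmf map_pmf_comp bind_return_pmf')
      then have "measure_pmf.prob ?p {\<tau>. fst (\<tau> ! i) \<in> S} = measure_pmf.prob (trans M x a) S"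
        using True measure_map_pmf[of "\<lambda>\<tau>. fst (\<tau> ! 1)" ?p S] by (simp add: vimage_def)
      then show ?thesis using assms by simp
    next
      case False
      have "(#) (x, a, r) -` {\<tau>. fst (\<tau> ! i) \<in> S} = {\<tau>. fst (\<tau> ! (i - 1)) \<in> S}"
        using Suc.prems by (auto simp: nth_Cons')
      then show ?thesis
        using Suc.IH[of "i - 1"] Suc.prems False by (intro prob_bind_pmf_le) simp
    qed
  qed
qed

lemma prob_traj_state_le:
  assumes "\<And>x a. measure_pmf.prob (trans M x a) S \<le> c" "1 \<le> i" "i < H"
  shows "measure_pmf.prob (traj M \<pi> H) {\<tau>. fst (\<tau> ! i) \<in> S} \<le> c"
  unfolding traj_def using assms by (intro prob_bind_pmf_le prob_traj_from_state_le)

lemma pmf_traj_from_Suc_Nil: "pmf (traj_from M \<pi> (Suc k) x) [] = 0"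
  using set_pmf_traj_from[of "[]" M \<pi> "Suc k" x] set_pmf_iff by fastforce

lemma pmf_traj_from_Suc_Cons:
  "pmf (traj_from M \<pi> (Suc k) x) ((y, a, r) # \<tau>) =
    (if y = x then pmf (\<pi> x) a * pmf (rew M x a) r *
       (if k = 0 then of_bool (\<tau> = [])
        else pmf (trans M x a) (fst (\<tau> ! 0)) * pmf (traj_from M \<pi> k (fst (\<tau> ! 0))) \<tau>)
     else 0)"
proof -
  define G where "G = (\<lambda>x'. map_pmf ((#) (x, a, r)) (traj_from M \<pi> k x'))"
  have "pmf (traj_from M \<pi> (Suc k) x) ((y, a, r) # \<tau>) =
      pmf (\<pi> x) a * (pmf (rew M x a) r * pmf (bind_pmf (trans M x a) G) ((y, a, r) # \<tau>))"
    unfolding traj_from.simps G_def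
    by (subst pmf_bind_pmf_recover[where g="\<lambda>t. fst (snd (hd t))"], force,
        subst pmf_bind_pmf_recover[where g="\<lambda>t. snd (snd (hd t))"], force) simp
  also have "pmf (bind_pmf (trans M x a) G) ((y, a, r) # \<tau>) =
      (if y = x then (if k = 0 then of_bool (\<tau> = [])
        else pmf (trans M x a) (fst (\<tau> ! 0)) * pmf (traj_from M \<pi> k (fst (\<tau> ! 0))) \<tau>) else 0)"
  proof (cases "k = 0")
    case True
    then show ?thesis by (simp add: G_def bind_return_pmf' map_pmf_def[symmetric])
  next
    case False
    have "pmf (bind_pmf (trans M x a) G) ((y, a, r) # \<tau>) =
        pmf (trans M x a) (fst (\<tau> ! 0)) * pmf (G (fst (\<tau> ! 0))) ((y, a, r) # \<tau>)"
      using False set_pmf_traj_from[of _ M \<pi> k]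
      by (subst pmf_bind_pmf_recover[where g="\<lambda>t. fst (tl t ! 0)"]) (auto simp: G_def)
    then show ?thesis
      using False by (simp add: G_def pmf_map_pmf_left_inverse[where g=tl])
  qed
  finally show ?thesis by simp
qed

section \<open>Testing two mixtures\<close>

text \<open>Le Cam's two-point method for two mixtures: if the data distributions under the two
  hypotheses, averaged over the nuisance parameter, agree on an event of probability at least 1/2,
  no test has error probability below 1/4 under all parameters.\<close>

lemma two_mixtures_testing_lower_bound:
  fixes P :: "bool \<Rightarrow> 'w \<Rightarrow> 'd pmf" and err :: "bool \<Rightarrow> 'd \<Rightarrow> real"
  assumes Ws: "finite Ws" "Ws \<noteq> {}"
    and S: "finite S" "\<And>\<sigma> w. w \<in> Ws \<Longrightarrow> set_pmf (P \<sigma> w) \<subseteq> S"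
    and likely: "\<And>\<sigma> w. w \<in> Ws \<Longrightarrow> measure_pmf.prob (P \<sigma> w) G \<ge> 1/2"
    and mix: "\<And>d. d \<in> S \<Longrightarrow> d \<in> G \<Longrightarrow> (\<Sum>w\<in>Ws. pmf (P True w) d) = (\<Sum>w\<in>Ws. pmf (P False w) d)"
    and err: "\<And>\<sigma> d. 0 \<le> err \<sigma> d" "\<And>d. err True d + err False d \<ge> 1"
  shows "\<exists>\<sigma> w. w \<in> Ws \<and> measure_pmf.expectation (P \<sigma> w) (err \<sigma>) \<ge> 1/4"
proof (rule ccontr)
  assume "\<not> ?thesis"
  then have small: "measure_pmf.expectation (P \<sigma> w) (err \<sigma>) < 1/4" if "w \<in> Ws" for \<sigma> w
    using that by (auto simp: not_le)
  define SG where "SG = S \<inter> G"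
  have fin: "finite SG" using S(1) by (simp add: SG_def)
  have E: "measure_pmf.expectation (P \<sigma> w) (err \<sigma>) = (\<Sum>d\<in>S. err \<sigma> d * pmf (P \<sigma> w) d)"
    if "w \<in> Ws" for \<sigma> w
    by (rule integral_measure_pmf_real) (use S that in auto)
  have E_ge: "measure_pmf.expectation (P \<sigma> w) (err \<sigma>) \<ge> (\<Sum>d\<in>SG. err \<sigma> d * pmf (P \<sigma> w) d)"
    if "w \<in> Ws" for \<sigma> w
    unfolding E[OF that] SG_def using S(1) err(1)
    by (intro sum_mono2) auto
  have probG: "measure_pmf.prob (P True w) G = (\<Sum>d\<in>SG. pmf (P True w) d)" if "w \<in> Ws" for w
  proof -
    have "measure_pmf.prob (P True w) G = measure_pmf.prob (P True w) SG"
      using S(2)[OF that] measure_Int_set_pmf[of "P True w"] unfolding SG_def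
      by (metis Int_absorb2 Int_assoc Int_commute)
    then show ?thesis by (simp add: measure_measure_pmf_finite fin)
  qed
  have "real (card Ws) / 2 = (\<Sum>w\<in>Ws. 1/2)" by simp
  also have "\<dots> \<le> (\<Sum>w\<in>Ws. \<Sum>d\<in>SG. pmf (P True w) d)"
    by (intro sum_mono) (metis likely probG)
  also have "\<dots> = (\<Sum>d\<in>SG. \<Sum>w\<in>Ws. pmf (P True w) d)" by (rule sum.swap)
  also have "\<dots> \<le> (\<Sum>d\<in>SG. (err True d + err False d) * (\<Sum>w\<in>Ws. pmf (P True w) d))"
  proof (intro sum_mono)
    fix d
    show "(\<Sum>w\<in>Ws. pmf (P True w) d) \<le> (err True d + err False d) * (\<Sum>w\<in>Ws. pmf (P True w) d)"
      using mult_right_mono[OF err(2)[of d] sum_nonneg[of Ws "\<lambda>w. pmf (P True w) d"]] by simp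
  qed
  also have "\<dots> = (\<Sum>d\<in>SG. err True d * (\<Sum>w\<in>Ws. pmf (P True w) d) + err False d * (\<Sum>w\<in>Ws. pmf (P False w) d))"
    by (intro sum.cong refl) (simp add: SG_def mix algebra_simps)
  also have "\<dots> = (\<Sum>w\<in>Ws. (\<Sum>d\<in>SG. err True d * pmf (P True w) d) + (\<Sum>d\<in>SG. err False d * pmf (P False w) d))"
    by (simp add: sum_distrib_left sum.distrib sum.swap[of _ SG])
  also have "\<dots> < (\<Sum>w\<in>Ws. 1/4 + 1/4)"
  proof (rule sum_strict_mono)
    fix w assume "w \<in> Ws"
    from E_ge[OF this, of True] E_ge[OF this, of False] small[OF this, of True] small[OF this, of False]
    show "(\<Sum>d\<in>SG. err True d * pmf (P True w) d) + (\<Sum>d\<in>SG. err False d * pmf (P False w) d) < 1/4 + 1/4"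
      by linarith
  qed (use Ws in auto)
  finally show False by simp
qed

section \<open>The hard instances\<close>

type_synonym mask = "(bool \<times> nat \<times> nat) set"

locale hard_mdp =
  fixes H J :: nat
  assumes J_pos: "0 < J" and H_pos: "1 \<le> H"
begin

text \<open>States are natural numbers encoding a layer, a cell \<open>j < J\<close> and two visible bits.\<close>

definition state :: "nat \<Rightarrow> nat \<Rightarrow> bool \<Rightarrow> bool \<Rightarrow> nat" where
  "state h j t s = 4 * (J * h + j) + 2 * of_bool t + of_bool s"
definition layer :: "nat \<Rightarrow> nat" where "layer x = x div (4 * J)"
definition cell :: "nat \<Rightarrow> nat" where "cell x = x div 4 mod J"
definition tbit :: "nat \<Rightarrow> bool" where "tbit x = odd (x div 2)"
definition sbit :: "nat \<Rightarrow> bool" where "sbit x = odd x"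

lemma state_div_4: "state h j t s div 4 = J * h + j"
  unfolding state_def by (cases t; cases s) auto

lemma layer_state[simp]: "j < J \<Longrightarrow> layer (state h j t s) = h"
  unfolding layer_def by (simp add: div_mult2_eq state_div_4)

lemma cell_state[simp]: "j < J \<Longrightarrow> cell (state h j t s) = j"
  unfolding cell_def by (simp add: state_div_4)

lemma tbit_state[simp]: "tbit (state h j t s) = t"
  unfolding tbit_def state_def by (cases t; cases s) auto

lemma sbit_state[simp]: "sbit (state h j t s) = s"
  unfolding sbit_def state_def by (cases t; cases s) auto

lemma cell_less[simp]: "cell x < J"
  unfolding cell_def using J_pos by simp

lemma state_decode: "state (layer x) (cell x) (tbit x) (sbit x) = x"
proof -
  have layer: "x div 4 div J = layer x" unfolding layer_def by (simp add: div_mult2_eq)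
  have cells: "J * layer x + cell x = x div 4" unfolding cell_def layer[symmetric] by simp
  have bits: "x mod 4 = 2 * of_bool (tbit x) + of_bool (sbit x)"
    unfolding tbit_def sbit_def using mod_mult2_eq[of x 2 2] by (simp add: mod_2_eq_odd)
  have "state (layer x) (cell x) (tbit x) (sbit x) =
      4 * (J * layer x + cell x) + (2 * of_bool (tbit x) + of_bool (sbit x))"
    unfolding state_def by (simp only: add.assoc)
  also have "\<dots> = 4 * (x div 4) + x mod 4" by (simp only: cells bits)
  finally show ?thesis by (simp only: mult_div_mod_eq)
qed

lemma state_eq_iff:
  assumes "j < J"
  shows "state h j t s = x \<longleftrightarrow> h = layer x \<and> j = cell x \<and> t = tbit x \<and> s = sbit x"
proof
  assume "state h j t s = x"
  then show "h = layer x \<and> j = cell x \<and> t = tbit x \<and> s = sbit x"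
    using assms by auto
qed (use state_decode in auto)

text \<open>A mask \<open>W\<close> fixes, for every cell \<open>j\<close> of layer \<open>h\<ge>2\<close>, the bit \<open>(True, h, j) \<in> W\<close> by which the
  visible bit \<open>tbit\<close> is scrambled into the hidden bit, and the bit \<open>(False, h, j) \<in> W\<close> by which
  \<open>sbit\<close> is scrambled into whether action \<open>False\<close> toggles the hidden bit.\<close>

definition mask_t :: "mask \<Rightarrow> nat \<Rightarrow> nat \<Rightarrow> bool" where "mask_t W h j = ((True, h, j) \<in> W)"
definition mask_s :: "mask \<Rightarrow> nat \<Rightarrow> nat \<Rightarrow> bool" where "mask_s W h j = ((False, h, j) \<in> W)"

definition hidden :: "mask \<Rightarrow> nat \<Rightarrow> bool" where
  "hidden W x = (layer x \<noteq> 1 \<and> tbit x \<noteq> mask_t W (layer x) (cell x))"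
definition toggles :: "mask \<Rightarrow> nat \<Rightarrow> bool" where
  "toggles W x = (layer x = 1 \<or> sbit x \<noteq> mask_s W (layer x) (cell x))"

definition unif_cell :: "nat pmf" where "unif_cell = pmf_of_set {..<J}"
definition unif_layer :: "nat \<Rightarrow> nat pmf" where
  "unif_layer h = bind_pmf unif_cell (\<lambda>j. bind_pmf coin (\<lambda>t. map_pmf (state h j t) coin))"
definition layer_given_hidden :: "mask \<Rightarrow> nat \<Rightarrow> bool \<Rightarrow> nat pmf" where
  "layer_given_hidden W h b = bind_pmf unif_cell (\<lambda>j. map_pmf (state h j (b \<noteq> mask_t W h j)) coin)"

definition hidden_next :: "(nat \<Rightarrow> bool) \<Rightarrow> (nat \<Rightarrow> bool) \<Rightarrow> nat \<Rightarrow> bool \<Rightarrow> bool" where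
  "hidden_next B K x a = (if a then B x else B x \<noteq> K x)"

definition reward :: "bool \<Rightarrow> (nat \<Rightarrow> bool) \<Rightarrow> nat \<Rightarrow> real" where
  "reward \<sigma> B x = (if layer x = H then (if \<sigma> \<noteq> B x then 1 else -1) else 0)"

definition inst :: "bool \<Rightarrow> mask \<Rightarrow> mdp" where
  "inst \<sigma> W = \<lparr>init = unif_layer 1,
     trans = (\<lambda>x a. layer_given_hidden W (Suc (layer x)) (hidden_next (hidden W) (toggles W) x a)),
     rew = (\<lambda>x a. return_pmf (reward \<sigma> (hidden W) x))\<rparr>"

definition Layer :: "nat \<Rightarrow> nat set" where "Layer h = {x. layer x = h}"

abbreviation uniform_policy :: policy where "uniform_policy \<equiv> (\<lambda>_. coin)"

lemma set_pmf_unif_cell[simp]: "set_pmf unif_cell = {..<J}"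
  unfolding unif_cell_def using J_pos by (subst set_pmf_of_set) auto

lemma pmf_unif_cell: "pmf unif_cell j = (if j < J then 1 / J else 0)"
  unfolding unif_cell_def using J_pos by (subst pmf_of_set) auto

lemma pmf_unif_layer: "pmf (unif_layer h) x = (if layer x = h then 1 / (4 * J) else 0)"
proof -
  have "pmf (unif_layer h) x =
      pmf unif_cell (cell x) * pmf (bind_pmf coin (\<lambda>t. map_pmf (state h (cell x) t) coin)) x"
    unfolding unif_layer_def by (rule pmf_bind_pmf_recover) auto
  also have "\<dots> = 1 / J * (pmf coin (tbit x) * pmf (map_pmf (state h (cell x) (tbit x)) coin) x)"
    by (subst pmf_bind_pmf_recover[where g=tbit]) (auto simp: pmf_unif_cell)
  also have "\<dots> = 1 / J * (1/2 * (if layer x = h then 1/2 else 0))"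
    by (subst pmf_map_pmf_left_inverse[where g=sbit]) (auto simp: state_eq_iff)
  finally show ?thesis by simp
qed

lemma pmf_layer_given_hidden:
  "pmf (layer_given_hidden W h b) x =
     (if layer x = h \<and> tbit x = (b \<noteq> mask_t W h (cell x)) then 1 / (2 * J) else 0)"
proof -
  have "pmf (layer_given_hidden W h b) x =
      pmf unif_cell (cell x) * pmf (map_pmf (state h (cell x) (b \<noteq> mask_t W h (cell x))) coin) x"
    unfolding layer_given_hidden_def by (rule pmf_bind_pmf_recover) auto
  also have "\<dots> = 1 / J * (if layer x = h \<and> tbit x = (b \<noteq> mask_t W h (cell x)) then 1/2 else 0)"
    by (subst pmf_map_pmf_left_inverse[where g=sbit]) (auto simp: state_eq_iff pmf_unif_cell)
  finally show ?thesis
    by (cases "layer x = h \<and> tbit x = (b \<noteq> mask_t W h (cell x))")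
       (simp_all only: if_True if_False, simp_all)
qed

lemma set_pmf_unif_layer: "set_pmf (unif_layer h) = Layer h"
  using J_pos by (auto simp: set_pmf_iff pmf_unif_layer Layer_def split: if_splits)

lemma set_pmf_layer_given_hidden:
  "set_pmf (layer_given_hidden W h b) = {x. layer x = h \<and> tbit x = (b \<noteq> mask_t W h (cell x))}"
  using J_pos by (auto simp: set_pmf_iff pmf_layer_given_hidden split: if_splits)

lemma pmf_trans_inst:
  assumes "1 \<le> layer x"
  shows "pmf (trans (inst \<sigma> W) x a) z =
    (if layer z = Suc (layer x) \<and> hidden W z = hidden_next (hidden W) (toggles W) x a then 1 / (2 * J) else 0)"
  using assms by (auto simp: inst_def pmf_layer_given_hidden hidden_def)

lemma bind_coin_layer_given_hidden: "bind_pmf coin (layer_given_hidden W h) = unif_layer h"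
proof -
  have "bind_pmf coin (layer_given_hidden W h) =
      bind_pmf unif_cell (\<lambda>j. bind_pmf coin (\<lambda>b. map_pmf (state h j (b \<noteq> mask_t W h j)) coin))"
    unfolding layer_given_hidden_def by (rule bind_commute_pmf)
  also have "\<dots> = unif_layer h" unfolding unif_layer_def
    by (subst bind_pmf_coin_xor[where G="\<lambda>t. map_pmf (state h _ t) coin"]) (rule refl)
  finally show ?thesis .
qed

text \<open>Under the uniform policy the next hidden bit is a fair coin: in layer 1 it is the negated
  action, later the visible bit \<open>tbit\<close> is a fresh fair coin xor-ed into it.\<close>

lemma hidden_next_unif_layer:
  assumes "h \<ge> 1"
  shows "bind_pmf (unif_layer h) (\<lambda>x. map_pmf (hidden_next (hidden W) (toggles W) x) coin) = coin"
proof -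
  have xor: "map_pmf (\<lambda>t. t = (\<not> c)) coin = coin" for c
    using map_pmf_xor_coin[of c] by simp
  have "bind_pmf (unif_layer h) (\<lambda>x. map_pmf (hidden_next (hidden W) (toggles W) x) coin) =
     bind_pmf unif_cell (\<lambda>j. bind_pmf coin (\<lambda>t. bind_pmf coin (\<lambda>s.
       map_pmf (hidden_next (hidden W) (toggles W) (state h j t s)) coin)))"
    unfolding unif_layer_def by (simp add: bind_assoc_pmf map_pmf_def bind_return_pmf)
  also have "\<dots> = bind_pmf unif_cell (\<lambda>j. coin)"
  proof (rule bind_pmf_cong[OF refl])
    fix j assume "j \<in> set_pmf unif_cell"
    then have j: "j < J" by simp
    show "bind_pmf coin (\<lambda>t. bind_pmf coin (\<lambda>s.
        map_pmf (hidden_next (hidden W) (toggles W) (state h j t s)) coin)) = coin"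
    proof (cases "h = 1")
      case True
      then have "hidden_next (hidden W) (toggles W) (state h j t s) = Not" for t s
        using j by (auto simp: hidden_next_def hidden_def toggles_def)
      moreover have "map_pmf Not coin = coin" using map_pmf_xor_coin[of True] by simp
      ultimately show ?thesis by (simp add: map_pmf_def[symmetric])
    next
      case False
      define c where "c = (\<lambda>s a. if a then mask_t W h j else (mask_t W h j \<noteq> (s \<noteq> mask_s W h j)))"
      have e: "hidden_next (hidden W) (toggles W) (state h j t s) = (\<lambda>a. t \<noteq> c s a)" for t s
        using j False by (intro ext) (auto simp: hidden_next_def hidden_def toggles_def c_def)
      have "bind_pmf coin (\<lambda>t. bind_pmf coin (\<lambda>s. map_pmf (\<lambda>a. t \<noteq> c s a) coin)) =
          bind_pmf coin (\<lambda>s. bind_pmf coin (\<lambda>a. map_pmf (\<lambda>t. t \<noteq> c s a) coin))"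
        unfolding map_pmf_def by (subst bind_commute_pmf, subst (2) bind_commute_pmf) (rule refl)
      also have "\<dots> = coin" by (simp add: xor)
      finally show ?thesis by (simp add: e)
    qed
  qed
  also have "\<dots> = coin" by simp
  finally show ?thesis .
qed

lemma state_dist_inst: "state_dist (inst \<sigma> W) uniform_policy (Suc k) = unif_layer (Suc k)"
proof (induction k)
  case 0
  then show ?case by (simp add: state_dist_def inst_def)
next
  case (Suc k)
  have "state_dist (inst \<sigma> W) uniform_policy (Suc (Suc k)) =
      bind_pmf (unif_layer (Suc k)) (\<lambda>x. bind_pmf coin (\<lambda>a. trans (inst \<sigma> W) x a))"
    using Suc by (simp add: state_dist_def)
  also have "\<dots> = bind_pmf (unif_layer (Suc k)) (\<lambda>x. bind_pmf (map_pmf (hidden_next (hidden W) (toggles W) x) coin)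
      (layer_given_hidden W (Suc (Suc k))))"
    by (rule bind_pmf_cong[OF refl]) (simp add: set_pmf_unif_layer Layer_def inst_def bind_map_pmf)
  also have "\<dots> = bind_pmf (bind_pmf (unif_layer (Suc k)) (\<lambda>x. map_pmf (hidden_next (hidden W) (toggles W) x) coin))
      (layer_given_hidden W (Suc (Suc k)))"
    by (simp add: bind_assoc_pmf)
  also have "\<dots> = unif_layer (Suc (Suc k))"
    by (simp add: hidden_next_unif_layer bind_coin_layer_given_hidden)
  finally show ?case .
qed

lemma finite_Layer: "finite (Layer h)"
proof (rule finite_subset)
  show "Layer h \<subseteq> {..< 4 * J * Suc h}"
  proof
    fix x assume "x \<in> Layer h"
    then have "x div (4 * J) = h" by (simp add: Layer_def layer_def)
    then show "x \<in> {..< 4 * J * Suc h}"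
      by (metis div_less_iff_less_mult lessI lessThan_iff mult.commute mult_pos_pos J_pos zero_less_numeral)
  qed
qed simp

lemma layered_inst: "layered_mdp Layer H (inst \<sigma> W)"
  unfolding layered_mdp_def
proof (intro conjI ballI allI impI)
  show "finite (Layer h)" for h
    by (rule finite_Layer)
  show "Layer h \<inter> Layer h' = {}" if "h \<noteq> h'" for h h'
    using that by (auto simp: Layer_def)
  show "set_pmf (trans (inst \<sigma> W) x a) \<subseteq> Layer (Suc h)" if "x \<in> Layer h" for h x a
    using that by (auto simp: inst_def Layer_def set_pmf_layer_given_hidden)
  show "set_pmf (rew (inst \<sigma> W) x a) \<subseteq> {-1..1}" for x a
    by (simp add: inst_def reward_def)
  have "init (inst \<sigma> W) = unif_layer 1"
    unfolding inst_def by (rule mdp.select_convs(1))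
  then show "set_pmf (init (inst \<sigma> W)) \<subseteq> Layer 1"
    by (simp only: set_pmf_unif_layer order_refl)
qed

lemma pf_conc_inst: "pf_conc_le Layer H (inst \<sigma> W) (occupancy (inst \<sigma> W) uniform_policy) 4"
proof -
  have occ: "occupancy (inst \<sigma> W) uniform_policy (Suc k) x a = 1 / (8 * J)" if "layer x = Suc k" for k x a
    unfolding occupancy_def state_dist_inst using that by (simp add: pmf_unif_layer)
  have "pmf (init (inst \<sigma> W)) x \<le> 4 * occupancy (inst \<sigma> W) uniform_policy 1 x a"
    if "x \<in> Layer 1" for x a
    using that occ[of x 0] J_pos by (simp add: Layer_def inst_def pmf_unif_layer frac_le)
  moreover have "pmf (trans (inst \<sigma> W) x a) x' \<le> 4 * occupancy (inst \<sigma> W) uniform_policy (Suc h) x' a'"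
    if "x' \<in> Layer (Suc h)" for x a x' a' h
    using that occ[of x' h] J_pos by (simp add: Layer_def inst_def pmf_layer_given_hidden)
  ultimately show ?thesis unfolding pf_conc_le_def by blast
qed

lemma set_pmf_traj_from_inst:
  assumes "\<tau> \<in> set_pmf (traj_from (inst \<sigma> W) \<pi> k x)" "i < k"
  shows "layer (fst (\<tau> ! i)) = layer x + i \<and> snd (snd (\<tau> ! i)) \<in> {-1, 0, 1}"
  using assms
proof (induction k arbitrary: x \<tau> i)
  case (Suc k)
  from Suc.prems(1) obtain a x' \<tau>' where x': "layer x' = Suc (layer x)"
    and \<tau>': "\<tau>' \<in> set_pmf (traj_from (inst \<sigma> W) \<pi> k x')"
    and \<tau>: "\<tau> = (x, a, reward \<sigma> (hidden W) x) # \<tau>'"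
    by (auto simp: inst_def set_pmf_layer_given_hidden)
  show ?case
    using Suc.IH[OF \<tau>', of "i - 1"] Suc.prems(2) x' unfolding \<tau>
    by (cases i) (auto simp: reward_def)
qed simp

lemma sum_rewards_eval_policy:
  assumes "\<tau> \<in> set_pmf (traj_from (inst \<sigma> W) (det_policy (\<lambda>_. True)) k x)"
    "1 \<le> layer x" "\<not> hidden W x" "layer x + k = Suc H"
  shows "sum_list (map (\<lambda>(x, a, r). r) \<tau>) = (if 0 < k then (if \<sigma> then 1 else -1) else 0)"
  using assms
proof (induction k arbitrary: x \<tau>)
  case (Suc k)
  from Suc.prems(1) obtain x' \<tau>' where x': "x' \<in> set_pmf (layer_given_hidden W (Suc (layer x)) (hidden W x))"
    and \<tau>': "\<tau>' \<in> set_pmf (traj_from (inst \<sigma> W) (det_policy (\<lambda>_. True)) k x')"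
    and \<tau>: "\<tau> = (x, True, reward \<sigma> (hidden W) x) # \<tau>'"
    by (auto simp: det_policy_def inst_def hidden_next_def)
  have "layer x' = Suc (layer x)" "\<not> hidden W x'"
    using x' Suc.prems(3) by (auto simp: set_pmf_layer_given_hidden hidden_def)
  then show ?case
    using Suc.IH[OF \<tau>'] Suc.prems(3,4) unfolding \<tau> by (auto simp: reward_def)
qed simp

lemma policy_value_inst: "policy_value (inst \<sigma> W) (det_policy (\<lambda>_. True)) H = (if \<sigma> then 1 else -1)"
proof -
  have "sum_list (map (\<lambda>(x, a, r). r) \<tau>) = (if \<sigma> then 1 else -1)"
    if "\<tau> \<in> set_pmf (traj (inst \<sigma> W) (det_policy (\<lambda>_. True)) H)" for \<tau>
    using that H_pos sum_rewards_eval_policy[of \<tau> \<sigma> W H]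
    by (auto simp: traj_def inst_def set_pmf_unif_layer Layer_def hidden_def)
  then show ?thesis
    unfolding policy_value_def
    by (subst integral_cong_AE[where g="\<lambda>_. if \<sigma> then 1 else -1"]) (auto simp: AE_measure_pmf_iff)
qed

section \<open>Indistinguishability of the two signs\<close>

fun traj_lik :: "bool \<Rightarrow> (nat \<Rightarrow> bool) \<Rightarrow> (nat \<Rightarrow> bool) \<Rightarrow> nat \<Rightarrow> trajectory \<Rightarrow> real" where
  "traj_lik \<sigma> B K x [] = 1"
| "traj_lik \<sigma> B K x [(y, a, r)] = (if y = x \<and> r = reward \<sigma> B x then 1/2 else 0)"
| "traj_lik \<sigma> B K x ((y, a, r) # (z, a', r') # \<tau>) =
     (if y = x \<and> r = reward \<sigma> B x \<and> layer z = Suc (layer x) \<and> B z = hidden_next B K x a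
      then 1 / (4 * J) * traj_lik \<sigma> B K z ((z, a', r') # \<tau>) else 0)"

lemma pmf_traj_from_inst:
  assumes "1 \<le> layer x"
  shows "pmf (traj_from (inst \<sigma> W) uniform_policy k x) \<tau> =
    (if length \<tau> = k then traj_lik \<sigma> (hidden W) (toggles W) x \<tau> else 0)"
  using assms
proof (induction k arbitrary: x \<tau>)
  case 0
  then show ?case by (cases \<tau>) auto
next
  case (Suc k)
  show ?case
  proof (cases \<tau>)
    case Nil
    then show ?thesis by (simp only: pmf_traj_from_Suc_Nil) simp
  next
    case (Cons e \<tau>')
    obtain y a r where e: "e = (y, a, r)" by (cases e)
    note pmf_Cons = pmf_traj_from_Suc_Cons[of "inst \<sigma> W" uniform_policy k x y a r \<tau>']
    consider "k = 0" | "0 < k" "\<tau>' = []" | z a' r' \<tau>'' where "0 < k" "\<tau>' = (z, a', r') # \<tau>''"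
      by (cases \<tau>') auto
    then show ?thesis
    proof cases
      case 1
      then show ?thesis using pmf_Cons unfolding Cons e by (simp add: inst_def)
    next
      case 2
      then show ?thesis
        using pmf_Cons pmf_traj_from_Suc_Nil[of "inst \<sigma> W" uniform_policy "k - 1"]
        unfolding Cons e by simp
    next
      case 3
      have IH: "layer z = Suc (layer x) \<Longrightarrow> pmf (traj_from (inst \<sigma> W) uniform_policy k z) \<tau>' =
          (if length \<tau>' = k then traj_lik \<sigma> (hidden W) (toggles W) z \<tau>' else 0)"
        using Suc.IH[of z] by simp
      show ?thesis
        using pmf_Cons IH pmf_trans_inst[OF Suc.prems, of \<sigma> W a z] 3
        unfolding Cons e by (auto simp: inst_def)
    qed
  qed
qed

lemma pmf_traj_inst:
  "pmf (traj (inst \<sigma> W) uniform_policy H) \<tau> =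
    (if length \<tau> = H then pmf (unif_layer 1) (fst (\<tau> ! 0)) * traj_lik \<sigma> (hidden W) (toggles W) (fst (\<tau> ! 0)) \<tau>
     else 0)"
proof -
  have "pmf (traj (inst \<sigma> W) uniform_policy H) \<tau> =
      pmf (unif_layer 1) (fst (\<tau> ! 0)) * pmf (traj_from (inst \<sigma> W) uniform_policy H (fst (\<tau> ! 0))) \<tau>"
    unfolding traj_def using H_pos set_pmf_traj_from[of _ "inst \<sigma> W" uniform_policy H]
    by (subst pmf_bind_pmf_recover[where g="\<lambda>t. fst (t ! 0)"]) (auto simp: inst_def)
  then show ?thesis
    by (cases "layer (fst (\<tau> ! 0)) = 1") (simp_all add: pmf_traj_from_inst pmf_unif_layer)
qed

lemma traj_lik_cong:
  "\<forall>z\<in>fst ` set \<tau>. B1 z = B2 z \<and> K1 z = K2 z \<Longrightarrow> traj_lik \<sigma> B1 K1 x \<tau> = traj_lik \<sigma> B2 K2 x \<tau>"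
proof (induction \<sigma> B1 K1 x \<tau> rule: traj_lik.induct)
  case (3 \<sigma> B K x y a r z a' r' \<tau>)
  let ?c = "y = x \<and> r = reward \<sigma> B x \<and> layer z = Suc (layer x) \<and> B z = hidden_next B K x a"
  have "B y = B2 y" "K y = K2 y" "B z = B2 z" using 3(2) by auto
  then have c: "?c \<longleftrightarrow> y = x \<and> r = reward \<sigma> B2 x \<and> layer z = Suc (layer x) \<and> B2 z = hidden_next B2 K2 x a"
    by (auto simp: reward_def hidden_next_def)
  have "traj_lik \<sigma> B K z ((z, a', r') # \<tau>) = traj_lik \<sigma> B2 K2 z ((z, a', r') # \<tau>)" if ?c
    using 3(1)[OF that] 3(2) by simp
  then show ?case using c by simp
qed (auto simp: reward_def)

lemma traj_lik_flip_all:
  "\<forall>z\<in>fst ` set \<tau>. B' z = (\<not> B z) \<Longrightarrow> \<forall>i. Suc i < length \<tau> \<longrightarrow> fst (snd (\<tau> ! i)) \<Longrightarrow>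
    traj_lik \<sigma> B K x \<tau> = traj_lik (\<not> \<sigma>) B' K' x \<tau>"
proof (induction \<sigma> B K x \<tau> rule: traj_lik.induct)
  case (3 \<sigma> B K x y a r z a' r' \<tau>)
  let ?c = "y = x \<and> r = reward \<sigma> B x \<and> layer z = Suc (layer x) \<and> B z = hidden_next B K x a"
  have "a" using 3(3)[rule_format, of 0] by simp
  then have c: "?c \<longleftrightarrow> y = x \<and> r = reward (\<not> \<sigma>) B' x \<and> layer z = Suc (layer x) \<and> B' z = hidden_next B' K' x a"
    using 3(2) by (auto simp: reward_def hidden_next_def)
  have "traj_lik \<sigma> B K z ((z, a', r') # \<tau>) = traj_lik (\<not> \<sigma>) B' K' z ((z, a', r') # \<tau>)" if ?c
  proof (rule 3(1)[OF that])
    show "\<forall>z\<in>fst ` set ((z, a', r') # \<tau>). B' z = (\<not> B z)" using 3(2) by auto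
    show "\<forall>i. Suc i < length ((z, a', r') # \<tau>) \<longrightarrow> fst (snd (((z, a', r') # \<tau>) ! i))"
      using 3(3) by (metis Suc_less_eq length_Cons nth_Cons_Suc)
  qed
  then show ?case using c by simp
qed (auto simp: reward_def)

lemma traj_lik_flip_at_head:
  assumes "distinct (map fst ((y, a, r) # \<tau>))" "\<tau> \<noteq> []" "\<not> a" "layer y \<noteq> H"
    "\<forall>i. Suc i < length \<tau> \<longrightarrow> fst (snd (\<tau> ! i))" "\<forall>z\<in>fst ` set \<tau>. B' z = (\<not> B z)"
    "B' y = B y" "K' y = (\<not> K y)"
  shows "traj_lik \<sigma> B K x ((y, a, r) # \<tau>) = traj_lik (\<not> \<sigma>) B' K' x ((y, a, r) # \<tau>)"
proof -
  obtain z a' r' \<tau>' where \<tau>: "\<tau> = (z, a', r') # \<tau>'" using assms(2) by (cases \<tau>) auto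
  have "B' z = (\<not> B z)" using assms(6) \<tau> by simp
  then have "(y = x \<and> r = reward \<sigma> B x \<and> layer z = Suc (layer x) \<and> B z = hidden_next B K x a) \<longleftrightarrow>
      (y = x \<and> r = reward (\<not> \<sigma>) B' x \<and> layer z = Suc (layer x) \<and> B' z = hidden_next B' K' x a)"
    using assms(3,4,7,8) by (auto simp: reward_def hidden_next_def)
  moreover have "traj_lik \<sigma> B K z \<tau> = traj_lik (\<not> \<sigma>) B' K' z \<tau>"
    using assms(6,5) by (rule traj_lik_flip_all)
  ultimately show ?thesis unfolding \<tau> traj_lik.simps(3) by (simp only: \<tau>)
qed

lemma traj_lik_flip_at:
  assumes "distinct (map fst \<tau>)" "Suc k < length \<tau>" "\<not> fst (snd (\<tau> ! k))"
    "\<forall>i. k < i \<and> Suc i < length \<tau> \<longrightarrow> fst (snd (\<tau> ! i))"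
    "\<forall>i\<le>k. layer (fst (\<tau> ! i)) \<noteq> H"
    "\<And>z. B' z = (if z \<in> fst ` set (drop (Suc k) \<tau>) then \<not> B z else B z)"
    "\<And>z. K' z = (if z = fst (\<tau> ! k) then \<not> K z else K z)"
  shows "traj_lik \<sigma> B K x \<tau> = traj_lik (\<not> \<sigma>) B' K' x \<tau>"
  using assms
proof (induction \<tau> arbitrary: x k)
  case (Cons e \<tau>1)
  obtain y a r where e: "e = (y, a, r)" by (cases e)
  from Cons.prems(2) obtain z a' r' \<tau>2 where \<tau>1: "\<tau>1 = (z, a', r') # \<tau>2"
    by (cases \<tau>1) auto
  have y: "layer y \<noteq> H" using Cons.prems(5)[rule_format, of 0] e by simp
  have yz: "y \<notin> fst ` set \<tau>1" "z \<notin> fst ` set \<tau>2" using Cons.prems(1) e \<tau>1 by auto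
  show ?case
  proof (cases k)
    case 0
    show ?thesis unfolding e
    proof (rule traj_lik_flip_at_head)
      show "\<forall>i. Suc i < length \<tau>1 \<longrightarrow> fst (snd (\<tau>1 ! i))"
        using Cons.prems(4) 0 by (metis Suc_less_eq length_Cons nth_Cons_Suc zero_less_Suc)
    qed (use Cons.prems(1,3,6,7) 0 e \<tau>1 y yz in auto)
  next
    case (Suc k')
    have "drop (Suc k) (e # \<tau>1) = drop k' \<tau>2" using Suc \<tau>1 by simp
    moreover have "y \<notin> fst ` set (drop k' \<tau>2)" "z \<notin> fst ` set (drop k' \<tau>2)"
      using yz \<tau>1 by (auto dest: in_set_dropD)
    ultimately have "B' y = B y" "B' z = B z" using Cons.prems(6) by auto
    moreover have "K' y = K y"
    proof -
      have "fst ((e # \<tau>1) ! k) \<in> fst ` set \<tau>1" using Cons.prems(2) Suc by auto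
      then show ?thesis using Cons.prems(7)[of y] yz(1) by auto
    qed
    ultimately have "(y = x \<and> r = reward \<sigma> B x \<and> layer z = Suc (layer x) \<and> B z = hidden_next B K x a) \<longleftrightarrow>
        (y = x \<and> r = reward (\<not> \<sigma>) B' x \<and> layer z = Suc (layer x) \<and> B' z = hidden_next B' K' x a)"
      using y by (auto simp: reward_def hidden_next_def)
    moreover have "traj_lik \<sigma> B K z \<tau>1 = traj_lik (\<not> \<sigma>) B' K' z \<tau>1"
    proof (rule Cons.IH)
      show "\<forall>i. k' < i \<and> Suc i < length \<tau>1 \<longrightarrow> fst (snd (\<tau>1 ! i))"
        using Cons.prems(4) Suc by (metis Suc_less_eq length_Cons nth_Cons_Suc)
      show "\<forall>i\<le>k'. layer (fst (\<tau>1 ! i)) \<noteq> H"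
        using Cons.prems(5) Suc by (metis Suc_le_mono nth_Cons_Suc)
      show "distinct (map fst \<tau>1)" using Cons.prems(1) by simp
      show "Suc k' < length \<tau>1" using Cons.prems(2) Suc by simp
      show "\<not> fst (snd (\<tau>1 ! k'))" using Cons.prems(3) Suc by simp
      show "B' z = (if z \<in> fst ` set (drop (Suc k') \<tau>1) then \<not> B z else B z)" for z
        using Cons.prems(6) Suc by simp
      show "K' z = (if z = fst (\<tau>1 ! k') then \<not> K z else K z)" for z
        using Cons.prems(7) Suc by simp
    qed
    ultimately show ?thesis unfolding e \<tau>1 traj_lik.simps(3) by (simp only: \<tau>1)
  qed
qed simp

definition wf_traj :: "trajectory \<Rightarrow> bool" where
  "wf_traj \<tau> \<longleftrightarrow> length \<tau> = H \<and> (\<forall>i<H. layer (fst (\<tau> ! i)) = Suc i \<and> snd (snd (\<tau> ! i)) \<in> {-1, 0, 1})"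

definition explores :: "trajectory \<Rightarrow> bool" where
  "explores \<tau> \<longleftrightarrow> (\<exists>i. 1 \<le> i \<and> i + 2 \<le> H \<and> \<not> fst (snd (\<tau> ! i)))"

definition last_explore :: "trajectory \<Rightarrow> nat" where
  "last_explore \<tau> = Max {i. 1 \<le> i \<and> i + 2 \<le> H \<and> \<not> fst (snd (\<tau> ! i))}"

definition cells :: "trajectory \<Rightarrow> (nat \<times> nat) set" where
  "cells \<tau> = {(layer (fst (\<tau> ! i)), cell (fst (\<tau> ! i))) | i. 1 \<le> i \<and> i < length \<tau>}"

definition flip_mask :: "trajectory \<Rightarrow> mask" where
  "flip_mask \<tau> = insert (False, layer (fst (\<tau> ! last_explore \<tau>)), cell (fst (\<tau> ! last_explore \<tau>)))
     {(True, layer (fst (\<tau> ! i)), cell (fst (\<tau> ! i))) | i. last_explore \<tau> < i \<and> i < length \<tau>}"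

lemma last_explore:
  assumes "explores \<tau>"
  shows "1 \<le> last_explore \<tau>" "last_explore \<tau> + 2 \<le> H" "\<not> fst (snd (\<tau> ! last_explore \<tau>))"
    "\<And>i. last_explore \<tau> < i \<Longrightarrow> i + 2 \<le> H \<Longrightarrow> fst (snd (\<tau> ! i))"
proof -
  let ?S = "{i. 1 \<le> i \<and> i + 2 \<le> H \<and> \<not> fst (snd (\<tau> ! i))}"
  have fin: "finite ?S" by (rule finite_subset[of _ "{..H}"]) auto
  have "last_explore \<tau> \<in> ?S"
    unfolding last_explore_def using assms by (intro Max_in fin) (auto simp: explores_def)
  then show "1 \<le> last_explore \<tau>" "last_explore \<tau> + 2 \<le> H" "\<not> fst (snd (\<tau> ! last_explore \<tau>))"
    by auto
  fix i assume "last_explore \<tau> < i" "i + 2 \<le> H"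
  then show "fst (snd (\<tau> ! i))" using Max_ge[OF fin, of i] unfolding last_explore_def by (cases "1 \<le> i") auto
qed

lemma wf_traj_state_eq_iff:
  "wf_traj \<tau> \<Longrightarrow> i < H \<Longrightarrow> i' < H \<Longrightarrow> fst (\<tau> ! i) = fst (\<tau> ! i') \<longleftrightarrow> i = i'"
  unfolding wf_traj_def by (metis Suc_inject)

lemma wf_traj_distinct:
  assumes "wf_traj \<tau>"
  shows "distinct (map fst \<tau>)"
proof -
  have "length \<tau> = H" using assms by (simp add: wf_traj_def)
  then show ?thesis using wf_traj_state_eq_iff[OF assms] by (auto simp: distinct_conv_nth)
qed

lemma wf_traj_state_in_drop_iff:
  assumes "wf_traj \<tau>" "i < H"
  shows "fst (\<tau> ! i) \<in> fst ` set (drop (Suc k) \<tau>) \<longleftrightarrow> k < i"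
proof
  assume "fst (\<tau> ! i) \<in> fst ` set (drop (Suc k) \<tau>)"
  then obtain i' where "i' < length \<tau> - Suc k" "fst (\<tau> ! i) = fst (\<tau> ! (Suc k + i'))"
    by (auto simp: in_set_conv_nth)
  then show "k < i" using wf_traj_state_eq_iff[OF assms(1,2), of "Suc k + i'"] assms by (auto simp: wf_traj_def)
next
  assume "k < i"
  then show "fst (\<tau> ! i) \<in> fst ` set (drop (Suc k) \<tau>)"
    using assms by (force simp: in_set_conv_nth wf_traj_def intro: exI[of _ "i - Suc k"])
qed

lemma cells_flip_mask:
  assumes "explores \<tau>" "wf_traj \<tau>" "(b, p) \<in> flip_mask \<tau>"
  shows "p \<in> cells \<tau>"
proof -
  have "length \<tau> = H" using assms(2) by (simp add: wf_traj_def)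
  then show ?thesis
    using assms(3) last_explore(1,2)[OF assms(1)] unfolding flip_mask_def cells_def by force
qed

lemma hidden_toggles_flip_mask:
  fixes W :: mask
  assumes "wf_traj \<tau>" "explores \<tau>" "\<And>b p. (b, p) \<in> G \<Longrightarrow> p \<notin> cells \<tau>" "i < H"
  defines "W' \<equiv> sym_diff W (flip_mask \<tau> \<union> G)"
  shows "hidden W' (fst (\<tau> ! i)) = (hidden W (fst (\<tau> ! i)) \<noteq> (last_explore \<tau> < i))"
    and "toggles W' (fst (\<tau> ! i)) = (toggles W (fst (\<tau> ! i)) \<noteq> (i = last_explore \<tau>))"
proof -
  let ?z = "fst (\<tau> ! i)" and ?k = "last_explore \<tau>"
  have len: "length \<tau> = H" and lay: "\<And>i. i < H \<Longrightarrow> layer (fst (\<tau> ! i)) = Suc i"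
    using assms(1) by (auto simp: wf_traj_def)
  have k: "1 \<le> ?k" "?k < H" using last_explore(1,2)[OF assms(2)] by auto
  have notG: "(b, Suc i, cell ?z) \<notin> G" if "1 \<le> i" for b
    using assms(3)[of b] that assms(4) len lay unfolding cells_def by force
  have flip_t: "(True, Suc i, cell ?z) \<in> flip_mask \<tau> \<longleftrightarrow> ?k < i"
    using assms(4) len lay wf_traj_state_eq_iff[OF assms(1)] unfolding flip_mask_def
    by auto (metis lay)
  have flip_s: "(False, Suc i, cell ?z) \<in> flip_mask \<tau> \<longleftrightarrow> i = ?k"
    using assms(4) k lay unfolding flip_mask_def by auto
  show "hidden W' ?z = (hidden W ?z \<noteq> (?k < i))"
    using flip_t notG[of True] k lay[OF assms(4)]
    by (cases "i = 0") (auto simp: hidden_def mask_t_def W'_def)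
  show "toggles W' ?z = (toggles W ?z \<noteq> (i = ?k))"
    using flip_s notG[of False] k lay[OF assms(4)]
    by (cases "i = 0") (auto simp: toggles_def mask_s_def W'_def)
qed

lemma traj_lik_flip_mask:
  fixes W :: mask
  assumes "wf_traj \<tau>" "explores \<tau>" "\<And>b p. (b, p) \<in> G \<Longrightarrow> p \<notin> cells \<tau>"
  defines "W' \<equiv> sym_diff W (flip_mask \<tau> \<union> G)"
  shows "traj_lik \<sigma> (hidden W) (toggles W) x \<tau> = traj_lik (\<not> \<sigma>) (hidden W') (toggles W') x \<tau>"
proof -
  let ?k = "last_explore \<tau>"
  have len: "length \<tau> = H" using assms(1) by (simp add: wf_traj_def)
  note k = last_explore[OF assms(2)]
  define B' where "B' = (\<lambda>z. if z \<in> fst ` set (drop (Suc ?k) \<tau>) then \<not> hidden W z else hidden W z)"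
  define K' where "K' = (\<lambda>z. if z = fst (\<tau> ! ?k) then \<not> toggles W z else toggles W z)"
  have "traj_lik \<sigma> (hidden W) (toggles W) x \<tau> = traj_lik (\<not> \<sigma>) B' K' x \<tau>"
  proof (rule traj_lik_flip_at)
    show "\<forall>i\<le>?k. layer (fst (\<tau> ! i)) \<noteq> H"
      using assms(1) k(2) by (auto simp: wf_traj_def)
  qed (use wf_traj_distinct[OF assms(1)] k len in \<open>auto simp: B'_def K'_def\<close>)
  also have "\<dots> = traj_lik (\<not> \<sigma>) (hidden W') (toggles W') x \<tau>"
  proof (rule traj_lik_cong, rule ballI)
    fix z assume "z \<in> fst ` set \<tau>"
    then obtain i where i: "i < H" "z = fst (\<tau> ! i)" using len by (auto simp: in_set_conv_nth)
    have "z = fst (\<tau> ! ?k) \<longleftrightarrow> i = ?k"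
      using wf_traj_state_eq_iff[OF assms(1) i(1), of ?k] i(2) k(2) by simp
    then show "B' z = hidden W' z \<and> K' z = toggles W' z"
      using hidden_toggles_flip_mask[OF assms(1-3) i(1), where W=W] wf_traj_state_in_drop_iff[OF assms(1) i(1)] i(2)
      unfolding B'_def K'_def W'_def by auto
  qed
  finally show ?thesis .
qed

lemma wf_traj_inst: "\<tau> \<in> set_pmf (traj (inst \<sigma> W) \<pi> H) \<Longrightarrow> wf_traj \<tau>"
  unfolding wf_traj_def traj_def
  using set_pmf_traj_from_inst set_pmf_traj_from by (fastforce simp: inst_def set_pmf_unif_layer Layer_def)

lemma cells_eq_image: "cells \<tau> = (\<lambda>i. (layer (fst (\<tau> ! i)), cell (fst (\<tau> ! i)))) ` {1..<length \<tau>}"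
  unfolding cells_def by auto

lemma cells_subset: "wf_traj \<tau> \<Longrightarrow> cells \<tau> \<subseteq> {2..H} \<times> {..<J}"
  unfolding cells_def wf_traj_def by auto

definition separated :: "trajectory list \<Rightarrow> bool" where
  "separated d \<longleftrightarrow> (\<forall>\<tau>\<in>set d. explores \<tau>) \<and> \<not> has_related_pair (\<lambda>\<tau> \<tau>'. cells \<tau> \<inter> cells \<tau>' \<noteq> {}) d"

definition masks :: "mask set" where "masks = Pow (UNIV \<times> {2..H} \<times> {..<J})"

lemma pmf_traj_flip_mask:
  assumes "wf_traj \<tau>" "explores \<tau>" "\<And>b p. (b, p) \<in> G \<Longrightarrow> p \<notin> cells \<tau>"
  shows "pmf (traj (inst \<sigma> W) uniform_policy H) \<tau> =
    pmf (traj (inst (\<not> \<sigma>) (sym_diff W (flip_mask \<tau> \<union> G))) uniform_policy H) \<tau>"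
  unfolding pmf_traj_inst using traj_lik_flip_mask[OF assms, where W=W and \<sigma>=\<sigma>] by simp

text \<open>The flips for the trajectories of a separated dataset live on disjoint cells, so their
  union flips the mask for all of them at once.\<close>

lemma sum_masks_pmf_dataset:
  assumes "separated d" "\<forall>\<tau>\<in>set d. wf_traj \<tau>"
  shows "(\<Sum>W\<in>masks. pmf (dataset (inst True W) uniform_policy H n) d) =
         (\<Sum>W\<in>masks. pmf (dataset (inst False W) uniform_policy H n) d)"
proof -
  define F where "F = (\<Union>\<tau>\<in>set d. flip_mask \<tau>)"
  have expl: "explores \<tau>" if "\<tau> \<in> set d" for \<tau> using assms(1) that by (simp add: separated_def)
  have disj: "cells \<tau> \<inter> cells \<tau>' = {}" if "\<tau> \<in> set d" "\<tau>' \<in> set d" "\<tau> \<noteq> \<tau>'" for \<tau> \<tau>'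
    using not_has_related_pair[of "\<lambda>\<tau> \<tau>'. cells \<tau> \<inter> cells \<tau>' \<noteq> {}" d \<tau> \<tau>'] assms(1) that
    by (auto simp: separated_def)
  have F: "F \<subseteq> UNIV \<times> {2..H} \<times> {..<J}"
  proof
    fix q assume "q \<in> F"
    then obtain \<tau> b p where \<tau>: "\<tau> \<in> set d" "(b, p) \<in> flip_mask \<tau>" and q: "q = (b, p)"
      unfolding F_def by (cases q) auto
    have "p \<in> cells \<tau>" using cells_flip_mask[OF expl[OF \<tau>(1)] _ \<tau>(2)] assms(2) \<tau>(1) by simp
    then show "q \<in> UNIV \<times> {2..H} \<times> {..<J}" using cells_subset assms(2) \<tau>(1) q by auto
  qed
  have each: "pmf (traj (inst True W) uniform_policy H) \<tau> = pmf (traj (inst False (sym_diff W F)) uniform_policy H) \<tau>"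
    if \<tau>: "\<tau> \<in> set d" for \<tau> W
  proof -
    have "F = flip_mask \<tau> \<union> (F - flip_mask \<tau>)" using \<tau> unfolding F_def by auto
    moreover have "p \<notin> cells \<tau>" if "(b, p) \<in> F - flip_mask \<tau>" for b p
    proof
      assume p: "p \<in> cells \<tau>"
      from that obtain \<tau>' where \<tau>': "\<tau>' \<in> set d" "(b, p) \<in> flip_mask \<tau>'" "\<tau>' \<noteq> \<tau>"
        unfolding F_def by auto
      then have "p \<in> cells \<tau>'" using cells_flip_mask[OF expl[OF \<tau>'(1)] _ \<tau>'(2)] assms(2) by simp
      then show False using disj[OF \<tau> \<tau>'(1)] \<tau>'(3) p by auto
    qed
    ultimately show ?thesis
      using pmf_traj_flip_mask[of \<tau> "F - flip_mask \<tau>" True W] \<tau> assms(2) expl by auto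
  qed
  have "(\<Sum>W\<in>masks. pmf (dataset (inst True W) uniform_policy H n) d) =
        (\<Sum>W\<in>masks. pmf (dataset (inst False (sym_diff W F)) uniform_policy H n) d)"
    unfolding dataset_def pmf_iid
    by (intro sum.cong refl) (auto intro!: arg_cong[where f=prod_list] simp: each)
  also have "\<dots> = (\<Sum>W\<in>masks. pmf (dataset (inst False W) uniform_policy H n) d)"
    unfolding masks_def by (rule sum_Pow_sym_diff[OF F, symmetric])
  finally show ?thesis .
qed

section \<open>Sample complexity\<close>

lemma prob_not_explores:
  "measure_pmf.prob (traj (inst \<sigma> W) uniform_policy H) {\<tau>. \<not> explores \<tau>} \<le> 4 / 2 ^ H"
proof -
  let ?p = "traj (inst \<sigma> W) uniform_policy H" and ?acts = "map (\<lambda>(x, a, r). a)"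
  define E where "E = {as. \<forall>i\<in>{1..H - 2}. as ! i}"
  have "\<not> explores \<tau> \<longleftrightarrow> ?acts \<tau> \<in> E" if "\<tau> \<in> set_pmf ?p" for \<tau>
  proof -
    have "length \<tau> = H" using wf_traj_inst[OF that] by (simp add: wf_traj_def)
    then have "?acts \<tau> ! i = fst (snd (\<tau> ! i))" if "i \<in> {1..H - 2}" for i
      using that by (auto simp: case_prod_unfold)
    then show ?thesis by (force simp: E_def explores_def)
  qed
  then have "{\<tau>. \<not> explores \<tau>} \<inter> set_pmf ?p = ?acts -` E \<inter> set_pmf ?p" by blast
  then have "measure_pmf.prob ?p {\<tau>. \<not> explores \<tau>} = measure_pmf.prob (map_pmf ?acts ?p) E"
    by (metis measure_Int_set_pmf measure_map_pmf)
  also have "\<dots> = (1/2) ^ (H - 2)"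
    unfolding map_actions_traj E_def by (subst prob_iid_coin_all) auto
  also have "\<dots> \<le> 4 / 2 ^ H"
  proof -
    have "(2::real) ^ H \<le> 4 * 2 ^ (H - 2)"
    proof (cases "2 \<le> H")
      case True
      then have "(2::real) ^ H = 2 ^ 2 * 2 ^ (H - 2)" by (metis le_add_diff_inverse power_add)
      then show ?thesis by simp
    next
      case False
      then have "(2::real) ^ H \<le> 2" using power_increasing[of H 1 "2::real"] by simp
      moreover have "(1::real) \<le> 2 ^ (H - 2)" by simp
      ultimately show ?thesis by linarith
    qed
    then show ?thesis by (simp add: field_simps)
  qed
  finally show ?thesis .
qed

lemma prob_trans_cell_le: "measure_pmf.prob (trans (inst \<sigma> W) x a) {x'. cell x' = j} \<le> 1 / J"
proof -
  let ?h = "Suc (layer x)" and ?b = "hidden_next (hidden W) (toggles W) x a"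
  have "measure_pmf.prob (trans (inst \<sigma> W) x a) {x'. cell x' = j} =
      measure_pmf.expectation unif_cell (\<lambda>j'. measure_pmf.prob
        (map_pmf (state ?h j' (?b \<noteq> mask_t W ?h j')) coin) {x'. cell x' = j})"
    unfolding inst_def layer_given_hidden_def by (simp add: prob_bind_pmf)
  also have "\<dots> = measure_pmf.expectation unif_cell (indicator {j})"
    by (rule integral_cong_AE) (auto simp: AE_measure_pmf_iff vimage_def)
  also have "\<dots> = pmf unif_cell j" by (simp add: measure_pmf_single)
  also have "\<dots> \<le> 1 / J" by (simp add: pmf_unif_cell)
  finally show ?thesis .
qed

lemma prob_cells_meet:
  assumes "wf_traj \<tau>0"
  shows "measure_pmf.prob (traj (inst \<sigma> W) uniform_policy H) {\<tau>. cells \<tau>0 \<inter> cells \<tau> \<noteq> {}} \<le> H / J"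
proof -
  let ?p = "traj (inst \<sigma> W) uniform_policy H"
  let ?A = "\<lambda>q. {\<tau>. fst (\<tau> ! (fst q - 1)) \<in> {x. cell x = snd q}}"
  have fin: "finite (cells \<tau>0)" by (simp add: cells_eq_image)
  have sub: "{\<tau>. cells \<tau>0 \<inter> cells \<tau> \<noteq> {}} \<inter> set_pmf ?p \<subseteq> (\<Union>q\<in>cells \<tau>0. ?A q)"
  proof
    fix \<tau> assume \<tau>: "\<tau> \<in> {\<tau>. cells \<tau>0 \<inter> cells \<tau> \<noteq> {}} \<inter> set_pmf ?p"
    then obtain q where q: "q \<in> cells \<tau>0" "q \<in> cells \<tau>" by auto
    then obtain i where i: "1 \<le> i" "i < length \<tau>" "q = (layer (fst (\<tau> ! i)), cell (fst (\<tau> ! i)))"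
      unfolding cells_def by auto
    have "wf_traj \<tau>" using \<tau> wf_traj_inst by blast
    then have "layer (fst (\<tau> ! i)) = Suc i" using i(2) unfolding wf_traj_def by auto
    then have "\<tau> \<in> ?A q" using i(3) by simp
    then show "\<tau> \<in> (\<Union>q\<in>cells \<tau>0. ?A q)" using q(1) by blast
  qed
  have "measure_pmf.prob ?p {\<tau>. cells \<tau>0 \<inter> cells \<tau> \<noteq> {}} =
      measure_pmf.prob ?p ({\<tau>. cells \<tau>0 \<inter> cells \<tau> \<noteq> {}} \<inter> set_pmf ?p)"
    by (simp add: measure_Int_set_pmf)
  also have "\<dots> \<le> measure_pmf.prob ?p (\<Union>q\<in>cells \<tau>0. ?A q)"
    by (rule measure_pmf.finite_measure_mono[OF sub]) simp
  also have "\<dots> \<le> (\<Sum>q\<in>cells \<tau>0. measure_pmf.prob ?p (?A q))"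
    by (rule measure_pmf.finite_measure_subadditive_finite) (auto simp: fin)
  also have "\<dots> \<le> (\<Sum>q\<in>cells \<tau>0. 1 / J)"
  proof (rule sum_mono)
    fix q assume "q \<in> cells \<tau>0"
    then have "fst q \<in> {2..H}" using cells_subset[OF assms] by (auto simp: mem_Times_iff)
    then have "1 \<le> fst q - 1" "fst q - 1 < H" by auto
    then show "measure_pmf.prob ?p (?A q) \<le> 1 / J"
      by (rule prob_traj_state_le[OF prob_trans_cell_le])
  qed
  also have "\<dots> \<le> H / J"
  proof -
    have "card (cells \<tau>0) \<le> card {1..<length \<tau>0}"
      unfolding cells_eq_image by (rule card_image_le) simp
    then have "card (cells \<tau>0) \<le> H" using assms by (simp add: wf_traj_def)
    then show ?thesis using J_pos by (simp add: divide_right_mono)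
  qed
  finally show ?thesis .
qed

lemma prob_not_separated:
  "measure_pmf.prob (dataset (inst \<sigma> W) uniform_policy H n) {d. \<not> separated d}
     \<le> n * (4 / 2 ^ H) + real n * real n * (H / J)"
proof -
  let ?p = "traj (inst \<sigma> W) uniform_policy H" and ?R = "\<lambda>\<tau> \<tau>'. cells \<tau> \<inter> cells \<tau>' \<noteq> {}"
  have "measure_pmf.prob (iid n ?p) {d. \<not> separated d} \<le>
      measure_pmf.prob (iid n ?p) ({d. \<exists>\<tau>\<in>set d. \<tau> \<in> {\<tau>. \<not> explores \<tau>}} \<union> {d. has_related_pair ?R d})"
    by (rule measure_pmf.finite_measure_mono) (auto simp: separated_def)
  also have "\<dots> \<le> measure_pmf.prob (iid n ?p) {d. \<exists>\<tau>\<in>set d. \<tau> \<in> {\<tau>. \<not> explores \<tau>}}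
      + measure_pmf.prob (iid n ?p) {d. has_related_pair ?R d}"
    by (rule measure_Un_le) auto
  also have "\<dots> \<le> n * (4 / 2 ^ H) + real n * real n * (H / J)"
  proof (rule add_mono)
    show "measure_pmf.prob (iid n ?p) {d. \<exists>\<tau>\<in>set d. \<tau> \<in> {\<tau>. \<not> explores \<tau>}} \<le> n * (4 / 2 ^ H)"
      using prob_iid_exists_le[of n ?p] prob_not_explores[of \<sigma> W]
      by (meson mult_left_mono of_nat_0_le_iff order_trans)
    show "measure_pmf.prob (iid n ?p) {d. has_related_pair ?R d} \<le> real n * real n * (H / J)"
      by (rule prob_iid_related_pair_le) (auto intro: prob_cells_meet wf_traj_inst)
  qed
  finally show ?thesis by (simp add: dataset_def)
qed

lemma prob_separated_ge:
  assumes "n * (4 / 2 ^ H) + real n * real n * (H / J) \<le> 1/2"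
  shows "measure_pmf.prob (dataset (inst \<sigma> W) uniform_policy H n) {d. separated d} \<ge> 1/2"
proof -
  let ?P = "dataset (inst \<sigma> W) uniform_policy H n"
  have "measure_pmf.prob ?P {d. \<not> separated d} = 1 - measure_pmf.prob ?P {d. separated d}"
    using measure_pmf.prob_compl[of "{d. separated d}" ?P]
    by (simp add: Compl_eq_Diff_UNIV[symmetric] Collect_neg_eq)
  then show ?thesis using prob_not_separated[of \<sigma> W n] assms by linarith
qed

definition wf_datasets :: "nat \<Rightarrow> trajectory list set" where
  "wf_datasets n = {d. set d \<subseteq> {\<tau>. wf_traj \<tau>} \<and> length d = n}"

lemma finite_wf_trajs: "finite {\<tau>. wf_traj \<tau>}"
proof -
  define Z where "Z = (\<Union>h\<in>{..H}. Layer h) \<times> (UNIV :: bool set) \<times> ({-1, 0, 1} :: real set)"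
  have "finite Z" unfolding Z_def using finite_Layer by auto
  moreover have "{\<tau>. wf_traj \<tau>} \<subseteq> {\<tau>. set \<tau> \<subseteq> Z \<and> length \<tau> = H}"
  proof
    fix \<tau> assume "\<tau> \<in> {\<tau>. wf_traj \<tau>}"
    then have len: "length \<tau> = H"
      and \<tau>: "\<And>i. i < H \<Longrightarrow> layer (fst (\<tau> ! i)) = Suc i \<and> snd (snd (\<tau> ! i)) \<in> {-1, 0, 1}"
      by (auto simp: wf_traj_def)
    have "set \<tau> \<subseteq> Z"
    proof
      fix e assume "e \<in> set \<tau>"
      then obtain i where i: "i < H" "\<tau> ! i = e" using len by (auto simp: in_set_conv_nth)
      obtain x a r where e: "e = (x, a, r)" by (cases e)
      show "e \<in> Z" using \<tau>[OF i(1)] i unfolding Z_def Layer_def e by auto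
    qed
    then show "\<tau> \<in> {\<tau>. set \<tau> \<subseteq> Z \<and> length \<tau> = H}" using len by simp
  qed
  ultimately show ?thesis using finite_lists_length_eq finite_subset by blast
qed

lemma finite_wf_datasets: "finite (wf_datasets n)"
  unfolding wf_datasets_def using finite_lists_length_eq[OF finite_wf_trajs] .

lemma set_pmf_dataset_inst: "set_pmf (dataset (inst \<sigma> W) uniform_policy H n) \<subseteq> wf_datasets n"
  unfolding dataset_def wf_datasets_def using set_pmf_iid wf_traj_inst by blast

theorem estimation_lower_bound:
  assumes "n * (4 / 2 ^ H) + real n * real n * (H / J) \<le> 1/2"
  shows "\<exists>\<sigma> W. W \<in> masks \<and> measure_pmf.prob (bind_pmf (dataset (inst \<sigma> W) uniform_policy H n) alg)
            {v. \<bar>v - policy_value (inst \<sigma> W) (det_policy (\<lambda>_. True)) H\<bar> > 1/2} \<ge> 1/4"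
proof -
  define err where "err \<sigma> d = measure_pmf.prob (alg d) {v. \<bar>v - (if \<sigma> then 1 else -1)\<bar> > (1/2::real)}"
    for \<sigma> d
  have "\<exists>\<sigma> W. W \<in> masks \<and> measure_pmf.expectation (dataset (inst \<sigma> W) uniform_policy H n) (err \<sigma>) \<ge> 1/4"
  proof (rule two_mixtures_testing_lower_bound[where P="\<lambda>\<sigma> W. dataset (inst \<sigma> W) uniform_policy H n"])
    show "finite masks" by (simp add: masks_def)
    show "masks \<noteq> {}" unfolding masks_def by blast
    show "finite (wf_datasets n)" by (rule finite_wf_datasets)
    show "set_pmf (dataset (inst \<sigma> W) uniform_policy H n) \<subseteq> wf_datasets n" for \<sigma> W
      by (rule set_pmf_dataset_inst)
    show "(\<Sum>W\<in>masks. pmf (dataset (inst True W) uniform_policy H n) d) =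
        (\<Sum>W\<in>masks. pmf (dataset (inst False W) uniform_policy H n) d)"
      if "d \<in> wf_datasets n" "d \<in> {d. separated d}" for d
      using that by (intro sum_masks_pmf_dataset) (auto simp: wf_datasets_def)
    show "measure_pmf.prob (dataset (inst \<sigma> W) uniform_policy H n) {d. separated d} \<ge> 1/2" for \<sigma> W
      by (rule prob_separated_ge[OF assms])
    show "0 \<le> err \<sigma> d" for \<sigma> d by (simp add: err_def)
    show "err True d + err False d \<ge> 1" for d
      unfolding err_def using prob_far_from_1_or_minus_1[of "alg d"] by simp
  qed
  then obtain \<sigma> W where "W \<in> masks"
    and "measure_pmf.expectation (dataset (inst \<sigma> W) uniform_policy H n) (err \<sigma>) \<ge> 1/4"
    by blast
  moreover have "measure_pmf.prob (bind_pmf (dataset (inst \<sigma> W) uniform_policy H n) alg)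
      {v. \<bar>v - policy_value (inst \<sigma> W) (det_policy (\<lambda>_. True)) H\<bar> > 1/2}
      = measure_pmf.expectation (dataset (inst \<sigma> W) uniform_policy H n) (err \<sigma>)"
    unfolding prob_bind_pmf policy_value_inst err_def ..
  ultimately show ?thesis by (intro exI[of _ \<sigma>] exI[of _ W] conjI) simp_all
qed

end

lemma sample_size_bound:
  fixes H n :: nat
  assumes "real n \<le> 2 ^ H / 16"
  shows "n * (4 / 2 ^ H) + real n * real n * (H / real (8 ^ H)) \<le> (1/2 :: real)"
proof -
  define t :: real where "t = 2 ^ H"
  have t: "0 < t" "real H \<le> t" "real (8 ^ H) = t * t * t"
    unfolding t_def using less_exp[of H]
    by (simp_all add: power_mult[symmetric] mult.commute[of H] power3_eq_cube[symmetric] power_mult)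
  have n: "real n \<le> t / 16" using assms by (simp add: t_def)
  have "real n * (4 / t) \<le> (t / 16) * (4 / t)" using n t by (intro mult_right_mono) auto
  also have "\<dots> = 1/4" using t by simp
  finally have first: "real n * (4 / t) \<le> 1/4" .
  have "real n * real n * (real H / (t * t * t)) \<le> (t / 16) * (t / 16) * (t / (t * t * t))"
    using n t by (intro mult_mono divide_right_mono) auto
  also have "\<dots> = 1/256" using t by (simp add: field_simps)
  finally have second: "real n * real n * (real H / (t * t * t)) \<le> 1/256" .
  show ?thesis using first second unfolding t_def[symmetric] t(3) by linarith
qed

theorem mainTheorem15:
  shows "\<exists>c::real. c > 0 \<and>
    (\<forall>H::nat. H \<ge> 1 \<longrightarrow>
      (\<exists>(X :: nat \<Rightarrow> nat set) (\<M> :: mdp set) (\<pi>e :: nat \<Rightarrow> bool) (\<pi>b :: policy).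
         (\<forall>M\<in>\<M>. layered_mdp X H M) \<and>
         (\<forall>M\<in>\<M>. pf_conc_le X H M (occupancy M \<pi>b) 4) \<and>
         (\<forall>(alg :: trajectory list \<Rightarrow> real pmf) (n::nat). real n \<le> c * 2 ^ H \<longrightarrow>
            (\<exists>M\<in>\<M>. measure_pmf.prob (bind_pmf (dataset M \<pi>b H n) alg)
                       {v. \<bar>v - policy_value M (det_policy \<pi>e) H\<bar> > 1/2} \<ge> 1/4))))"
proof (intro exI[of _ "1/16"] conjI allI impI)
  fix H :: nat assume "1 \<le> H"
  then interpret hard_mdp H "8 ^ H" by unfold_locales simp_all
  let ?M = "{inst \<sigma> W | \<sigma> W. W \<in> masks}"
  show "\<exists>X \<M> \<pi>e \<pi>b. (\<forall>M\<in>\<M>. layered_mdp X H M) \<and> (\<forall>M\<in>\<M>. pf_conc_le X H M (occupancy M \<pi>b) 4) \<and>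
      (\<forall>alg n. real n \<le> 1/16 * 2 ^ H \<longrightarrow> (\<exists>M\<in>\<M>. measure_pmf.prob (bind_pmf (dataset M \<pi>b H n) alg)
         {v. \<bar>v - policy_value M (det_policy \<pi>e) H\<bar> > 1/2} \<ge> 1/4))"
  proof (intro exI[of _ Layer] exI[of _ ?M] exI[of _ "\<lambda>_. True"] exI[of _ uniform_policy] conjI ballI allI impI)
    fix M assume "M \<in> ?M"
    then obtain \<sigma> W where M: "M = inst \<sigma> W" by auto
    show "layered_mdp Layer H M" unfolding M by (rule layered_inst)
    show "pf_conc_le Layer H M (occupancy M uniform_policy) 4" unfolding M by (rule pf_conc_inst)
  next
    fix alg :: "trajectory list \<Rightarrow> real pmf" and n :: nat
    assume "real n \<le> 1/16 * 2 ^ H"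
    then have "n * (4 / 2 ^ H) + real n * real n * (H / real (8 ^ H)) \<le> (1/2 :: real)"
      by (intro sample_size_bound) simp
    from estimation_lower_bound[OF this, of alg] show "\<exists>M\<in>?M. measure_pmf.prob (bind_pmf (dataset M uniform_policy H n) alg)
        {v. \<bar>v - policy_value M (det_policy (\<lambda>_. True)) H\<bar> > 1/2} \<ge> 1/4"
      by blast
  qed
qed (simp)

end
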